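(* Let $\mathbb{A}\colon\mathbb{R}^d\to\mathbb{R}^d$ be Lipschitz continuous and monotone, $T>0$, $X_0\in\mathbb{R}^d$, and let $(X,Z)\in\mathcal{C}^1([0,T),\mathbb{R}^{2d})$ be the solution of \[ \dot X(t)=-Z(t)-\mathbb{A}(X(t)),\qquad \dot Z(t)=-\frac{1}{T-t}Z(t)-\frac{1}{T-t}\mathbb{A}(X(t)),\qquad X(0)=X_0,\ Z(0)=0. \] Then $X$ extends continuously to $[0,T]$ (i.e., $X(T):=\lim_{t\to T^-}X(t)$ exists), and \[ \lim_{t\to T^-}\dot X(t)=\lim_{t\to T^-}\frac{X(t)-X(T)}{t-T}=0. \]
   Context: Monotone: $\langle\mathbb{A}x-\mathbb{A}y,x-y\rangle\ge0$ for all $x,y$. *)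

theory Defs
  imports "HOL-Analysis.Analysis"
begin

definition monotone_op :: "('a::real_inner \<Rightarrow> 'a) \<Rightarrow> bool" where
  "monotone_op A \<longleftrightarrow> (\<forall>x y. (A x - A y) \<bullet> (x - y) \<ge> 0)"

end

theory Submission
  imports Defs
begin

text \<open>Put the residual \<open>W = Z + A \<circ> X\<close>, so that \<open>X' = -W\<close>. If \<open>A\<close> were differentiable we would have
  \<open>W' = -W/(T - t) - A'(X) W\<close>, and monotonicity (\<open>\<langle>A'(X) W, W\<rangle> \<ge> 0\<close>) would make
  \<open>|W|\<^sup>2/(T - t)\<^sup>2\<close> nonincreasing. For merely Lipschitz \<open>A\<close> the same computation is carried out
  on difference quotients and yields a nonpositive upper right Dini derivative, which suffices.
  Hence \<open>|X'(t)| = |W(t)| \<le> K (T - t)\<close> with \<open>K = |W(0)|/T\<close>: the trajectory is Lipschitz, so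
  \<open>X(T)\<close> exists, and integrating gives \<open>|X(t) - X(T)| \<le> K (T - t)\<^sup>2\<close>.\<close>

lemma continuous_right_slope_le:
  fixes f :: "real \<Rightarrow> real"
  assumes cont: "continuous_on {a..b} f" and "a \<le> b"
    and slope: "\<And>t. t \<in> {a..<b} \<Longrightarrow> eventually (\<lambda>s. f s \<le> f t + e * (s - t)) (at_right t)"
  shows "f b \<le> f a + e * (b - a)"
proof -
  define S where "S = {x \<in> {a..b}. f x \<le> f a + e * (x - a)}"
  have "a \<in> S" using \<open>a \<le> b\<close> by (simp add: S_def)
  have bdd: "bdd_above S" by (auto simp: S_def bdd_above_def)
  have "closed S"
  proof -
    have "continuous_on {a..b} (\<lambda>x. f x - e * (x - a))"
      by (intro continuous_intros cont)
    then have "closed ({a..b} \<inter> (\<lambda>x. f x - e * (x - a)) -` {..f a})"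
      by (intro continuous_closed_preimage) auto
    moreover have "S = {a..b} \<inter> (\<lambda>x. f x - e * (x - a)) -` {..f a}"
      by (auto simp: S_def)
    ultimately show ?thesis by simp
  qed
  define c where "c = Sup S"
  have "c \<in> S" unfolding c_def using closed_contains_Sup[OF _ bdd \<open>closed S\<close>] \<open>a \<in> S\<close> by blast
  have "c = b"
  proof (rule ccontr)
    assume "c \<noteq> b"
    with \<open>c \<in> S\<close> have c: "a \<le> c" "c < b" by (auto simp: S_def)
    then obtain d where "d > c" and d: "\<And>y. c < y \<Longrightarrow> y < d \<Longrightarrow> f y \<le> f c + e * (y - c)"
      using slope[of c] unfolding eventually_at_right_field by auto
    define y where "y = (c + min d b) / 2"
    have y: "c < y" "y < d" "y < b" using \<open>d > c\<close> c by (auto simp: y_def)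
    then have "y \<in> S"
      using d[OF y(1,2)] \<open>c \<in> S\<close> c by (auto simp: S_def algebra_simps)
    then have "y \<le> c" unfolding c_def using bdd by (rule cSup_upper)
    with y show False by simp
  qed
  with \<open>c \<in> S\<close> show ?thesis by (simp add: S_def)
qed

lemma continuous_right_slopes_nonpos_imp_le:
  fixes f :: "real \<Rightarrow> real"
  assumes cont: "continuous_on {a..b} f" and "a \<le> b"
    and slope: "\<And>t e. t \<in> {a..<b} \<Longrightarrow> e > 0 \<Longrightarrow>
      eventually (\<lambda>s. f s \<le> f t + e * (s - t)) (at_right t)"
  shows "f b \<le> f a"
proof (cases "a = b")
  case False
  with \<open>a \<le> b\<close> have "a < b" by simp
  show ?thesis
  proof (rule field_le_epsilon)
    fix d :: real
    assume "d > 0"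
    with \<open>a < b\<close> have "f b \<le> f a + d / (b - a) * (b - a)"
      by (intro continuous_right_slope_le[OF cont \<open>a \<le> b\<close>] slope) auto
    with \<open>a < b\<close> show "f b \<le> f a + d" by simp
  qed
qed simp

lemma at_within_Ico_at_left:
  fixes a b :: real
  assumes "a < b"
  shows "at b within {a..<b} = at_left b"
proof -
  have "at b within {a..<b} = at b within {a..b}"
    by (rule at_within_nhd[of _ UNIV]) auto
  also have "\<dots> = at_left b" using at_within_Icc_at_left[OF assms] .
  finally show ?thesis .
qed

lemma has_vector_derivative_right_quotient:
  fixes f :: "real \<Rightarrow> 'a::real_normed_vector"
  assumes "(f has_vector_derivative f') (at t within {a..<b})" "a \<le> t" "t < b"
  shows "((\<lambda>s. (1 / (s - t)) *\<^sub>R (f s - f t) - f') \<longlongrightarrow> 0) (at_right t)"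
proof -
  have "at t within {t<..<b} = at_right t"
    by (rule at_within_nhd[of _ "{..<b}"]) (use assms in auto)
  moreover have "(f has_vector_derivative f') (at t within {t<..<b})"
    using assms by (elim has_vector_derivative_within_subset) auto
  ultimately have "((\<lambda>s. (1 / norm (s - t)) *\<^sub>R (f s - (f t + (s - t) *\<^sub>R f'))) \<longlongrightarrow> 0) (at_right t)"
    unfolding has_vector_derivative_def has_derivative_within by simp
  moreover have "eventually (\<lambda>s. (1 / norm (s - t)) *\<^sub>R (f s - (f t + (s - t) *\<^sub>R f'))
      = (1 / (s - t)) *\<^sub>R (f s - f t) - f') (at_right t)"
    unfolding eventually_at_right_field
    by (intro exI[of _ "t + 1"]) (auto simp: scaleR_diff_right scaleR_add_right)
  ultimately show ?thesis using tendsto_cong by fastforce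
qed

lemma norm_sq_scaled_add_le:
  fixes w v :: "'a::real_inner"
  assumes "0 \<le> a" "a \<le> 1" "w \<bullet> v \<le> B" "0 \<le> B"
  shows "(norm (a *\<^sub>R w + v))\<^sup>2 \<le> a\<^sup>2 * (norm w)\<^sup>2 + 2 * B + (norm v)\<^sup>2"
proof -
  have "a * (w \<bullet> v) \<le> B"
    using assms mult_left_mono[OF \<open>w \<bullet> v \<le> B\<close> \<open>0 \<le> a\<close>] mult_left_le_one_le[of B a] by linarith
  moreover have "(norm (a *\<^sub>R w + v))\<^sup>2 = a\<^sup>2 * (norm w)\<^sup>2 + 2 * a * (w \<bullet> v) + (norm v)\<^sup>2"
    unfolding power2_norm_eq_inner
    by (simp add: inner_add_left inner_add_right inner_commute power2_eq_square algebra_simps)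
  ultimately show ?thesis by simp
qed

locale anchored_monotone_ode =
  fixes A :: "'a::{real_inner, complete_space} \<Rightarrow> 'a"
    and X Z :: "real \<Rightarrow> 'a"
    and T L :: real
  assumes lipschitz: "L-lipschitz_on UNIV A"
    and monotone: "monotone_op A"
    and T_pos: "0 < T"
    and X_ode: "\<And>t. t \<in> {0..<T} \<Longrightarrow>
        (X has_vector_derivative (- Z t - A (X t))) (at t within {0..<T})"
    and Z_ode: "\<And>t. t \<in> {0..<T} \<Longrightarrow>
        (Z has_vector_derivative (- (1 / (T - t)) *\<^sub>R Z t - (1 / (T - t)) *\<^sub>R A (X t)))
          (at t within {0..<T})"
begin

definition residual :: "real \<Rightarrow> 'a" where
  "residual t = Z t + A (X t)"

definition residual_ratio :: "real \<Rightarrow> real" where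
  "residual_ratio t = (norm (residual t) / (T - t))\<^sup>2"

definition decay_rate :: real where
  "decay_rate = norm (residual 0) / T"

lemma X_has_derivative_residual:
  "t \<in> {0..<T} \<Longrightarrow> (X has_vector_derivative - residual t) (at t within {0..<T})"
  using X_ode by (simp add: residual_def)

lemma Z_has_derivative_residual:
  "t \<in> {0..<T} \<Longrightarrow> (Z has_vector_derivative - (1 / (T - t)) *\<^sub>R residual t) (at t within {0..<T})"
  using Z_ode by (simp add: residual_def scaleR_add_right)

lemma continuous_on_X: "continuous_on {0..<T} X"
  using X_has_derivative_residual has_vector_derivative_continuous continuous_on_eq_continuous_within
  by blast

lemma continuous_on_residual: "continuous_on {0..<T} residual"
proof -
  have "continuous_on {0..<T} Z"
    using Z_has_derivative_residual has_vector_derivative_continuous continuous_on_eq_continuous_within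
    by blast
  moreover have "continuous_on UNIV A" using lipschitz by (rule lipschitz_on_continuous_on)
  ultimately show ?thesis
    unfolding residual_def
    by (intro continuous_intros continuous_on_compose2[OF _ continuous_on_X]) auto
qed

definition X_quotient_error :: "real \<Rightarrow> real \<Rightarrow> 'a" where
  "X_quotient_error t s = (1 / (s - t)) *\<^sub>R (X s - X t) + residual t"

definition Z_quotient_error :: "real \<Rightarrow> real \<Rightarrow> 'a" where
  "Z_quotient_error t s = (1 / (s - t)) *\<^sub>R (Z s - Z t) + (1 / (T - t)) *\<^sub>R residual t"

definition step_defect :: "real \<Rightarrow> real \<Rightarrow> real" where
  "step_defect t s = (let w = residual t; p = X_quotient_error t s; q = Z_quotient_error t s in
     2 * norm w * norm q + 2 * L * norm p * norm (p - w) + (s - t) * (norm q + L * norm (p - w))\<^sup>2)"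

lemma residual_step_norm_sq:
  assumes "t < s" "s < T"
  shows "(norm (residual s))\<^sup>2 \<le> ((T - s) / (T - t))\<^sup>2 * (norm (residual t))\<^sup>2 + (s - t) * step_defect t s"
proof -
  define w p q where "w = residual t" and "p = X_quotient_error t s" and "q = Z_quotient_error t s"
  define h c where "h = s - t" and "c = T - t"
  have h: "0 < h" "h < c" using assms by (auto simp: h_def c_def)
  have L: "0 \<le> L" using lipschitz by (rule lipschitz_on_nonneg)
  have X_step: "X s - X t = h *\<^sub>R (p - w)"
    using h by (simp add: p_def w_def h_def X_quotient_error_def)
  have Z_step: "Z s - Z t = h *\<^sub>R q - (h / c) *\<^sub>R w"
    using h by (simp add: q_def w_def h_def c_def Z_quotient_error_def scaleR_add_right)
  define D where "D = A (X s) - A (X t)"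
  have norm_D: "norm D \<le> L * h * norm (p - w)"
    using lipschitz_onD[OF lipschitz, of "X s" "X t"] h by (simp add: dist_norm D_def X_step mult.assoc)
  have "0 \<le> D \<bullet> (X s - X t)" using monotone by (simp add: monotone_op_def D_def)
  then have "0 \<le> D \<bullet> (p - w)" using h by (simp add: X_step zero_le_mult_iff)
  \<comment> \<open>Monotonicity of \<open>A\<close> replaces the sign of \<open>\<langle>A'(X) W, W\<rangle>\<close> in the formal computation.\<close>
  then have "w \<bullet> D \<le> p \<bullet> D" by (simp add: inner_diff_right inner_commute)
  also have "\<dots> \<le> norm p * norm D" by (rule norm_cauchy_schwarz)
  also have "\<dots> \<le> norm p * (L * h * norm (p - w))" using norm_D by (rule mult_left_mono) simp
  also have "\<dots> = h * (L * norm p * norm (p - w))" by (simp add: algebra_simps)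
  finally have w_D: "w \<bullet> D \<le> h * (L * norm p * norm (p - w))" .
  define v where "v = h *\<^sub>R q + D"
  have residual_s: "residual s = (1 - h / c) *\<^sub>R w + v"
  proof -
    have "residual s = (Z s - Z t) + (Z t + A (X t)) + D" by (simp add: residual_def D_def)
    then show ?thesis by (simp add: Z_step v_def w_def residual_def algebra_simps)
  qed
  define B where "B = h * (norm w * norm q) + h * (L * norm p * norm (p - w))"
  have "w \<bullet> v \<le> B"
    using add_mono[OF mult_left_mono[OF norm_cauchy_schwarz[of w q]] w_D] h
    by (simp add: B_def v_def inner_add_right)
  moreover have "0 \<le> B" using h L by (simp add: B_def)
  ultimately have "(norm (residual s))\<^sup>2 \<le> (1 - h / c)\<^sup>2 * (norm w)\<^sup>2 + 2 * B + (norm v)\<^sup>2"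
    unfolding residual_s using h by (intro norm_sq_scaled_add_le) auto
  moreover have "norm v \<le> h * (norm q + L * norm (p - w))"
    using norm_triangle_ineq[of "h *\<^sub>R q" D] norm_D h by (simp add: v_def algebra_simps)
  then have "(norm v)\<^sup>2 \<le> (h * (norm q + L * norm (p - w)))\<^sup>2"
    by (intro power_mono) auto
  ultimately have "(norm (residual s))\<^sup>2 \<le> (1 - h / c)\<^sup>2 * (norm w)\<^sup>2
      + (2 * B + (h * (norm q + L * norm (p - w)))\<^sup>2)"
    by linarith
  moreover have "1 - h / c = (T - s) / (T - t)" using h by (simp add: h_def c_def field_simps)
  moreover have "2 * B + (h * (norm q + L * norm (p - w)))\<^sup>2 = h * step_defect t s"
    by (simp add: B_def step_defect_def Let_def w_def p_def q_def h_def power2_eq_square algebra_simps)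
  ultimately show ?thesis by (simp add: w_def h_def)
qed

lemma residual_ratio_step:
  assumes "t < s" "s < T"
  shows "residual_ratio s \<le> residual_ratio t + (s - t) * (step_defect t s / (T - s)\<^sup>2)"
proof -
  have "residual_ratio s = (norm (residual s))\<^sup>2 / (T - s)\<^sup>2"
    by (simp add: residual_ratio_def power_divide)
  also have "\<dots> \<le> (((T - s) / (T - t))\<^sup>2 * (norm (residual t))\<^sup>2 + (s - t) * step_defect t s) / (T - s)\<^sup>2"
    using residual_step_norm_sq[OF assms] by (rule divide_right_mono) simp
  also have "\<dots> = residual_ratio t + (s - t) * (step_defect t s / (T - s)\<^sup>2)"
    using assms by (simp add: residual_ratio_def power_divide add_divide_distrib)
  finally show ?thesis .
qed

lemma X_quotient_error_tendsto_0: "t \<in> {0..<T} \<Longrightarrow> (X_quotient_error t \<longlongrightarrow> 0) (at_right t)"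
  using has_vector_derivative_right_quotient[OF X_has_derivative_residual]
  unfolding X_quotient_error_def[abs_def] by simp

lemma Z_quotient_error_tendsto_0: "t \<in> {0..<T} \<Longrightarrow> (Z_quotient_error t \<longlongrightarrow> 0) (at_right t)"
  using has_vector_derivative_right_quotient[OF Z_has_derivative_residual]
  unfolding Z_quotient_error_def[abs_def] by simp

lemma step_defect_tendsto_0:
  assumes "t \<in> {0..<T}"
  shows "(step_defect t \<longlongrightarrow> 0) (at_right t)"
proof -
  have "(step_defect t \<longlongrightarrow> 2 * norm (residual t) * norm (0::'a) + 2 * L * norm (0::'a) * norm (0 - residual t)
      + (t - t) * (norm (0::'a) + L * norm (0 - residual t))\<^sup>2) (at_right t)"
    unfolding step_defect_def[abs_def] Let_def
    by (intro tendsto_intros X_quotient_error_tendsto_0 Z_quotient_error_tendsto_0 assms)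
  then show ?thesis by simp
qed

lemma residual_ratio_right_slope:
  assumes t: "t \<in> {0..<T}" and "e > 0"
  shows "eventually (\<lambda>s. residual_ratio s \<le> residual_ratio t + e * (s - t)) (at_right t)"
proof -
  have "((\<lambda>s. step_defect t s / (T - s)\<^sup>2) \<longlongrightarrow> 0 / (T - t)\<^sup>2) (at_right t)"
    using t by (intro tendsto_intros step_defect_tendsto_0) auto
  then have "eventually (\<lambda>s. step_defect t s / (T - s)\<^sup>2 < e) (at_right t)"
    using \<open>e > 0\<close> by (intro order_tendstoD) auto
  moreover have "eventually (\<lambda>s. t < s \<and> s < T) (at_right t)"
    unfolding eventually_at_right_field using t by (intro exI[of _ T]) auto
  ultimately show ?thesis
  proof eventually_elim
    case (elim s)
    then have "residual_ratio s \<le> residual_ratio t + (s - t) * (step_defect t s / (T - s)\<^sup>2)"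
      by (intro residual_ratio_step) auto
    also have "\<dots> \<le> residual_ratio t + (s - t) * e"
      using elim by (intro add_left_mono mult_left_mono) auto
    finally show ?case by (simp add: mult.commute)
  qed
qed

lemma decay_rate_nonneg: "0 \<le> decay_rate"
  using T_pos by (simp add: decay_rate_def)

lemma residual_bound:
  assumes "s \<in> {0..<T}"
  shows "norm (residual s) \<le> decay_rate * (T - s)"
proof -
  have "residual_ratio s \<le> residual_ratio 0"
  proof (rule continuous_right_slopes_nonpos_imp_le[where f = residual_ratio])
    show "continuous_on {0..s} residual_ratio"
      unfolding residual_ratio_def using assms
      by (intro continuous_intros continuous_on_subset[OF continuous_on_residual]) auto
  qed (use assms residual_ratio_right_slope in auto)
  then have "(norm (residual s) / (T - s))\<^sup>2 \<le> decay_rate\<^sup>2"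
    by (simp add: residual_ratio_def decay_rate_def)
  then have "norm (residual s) / (T - s) \<le> decay_rate"
    using decay_rate_nonneg by (rule power2_le_imp_le)
  with assms show ?thesis by (simp add: field_simps)
qed

lemma X_has_derivative_at:
  assumes "t \<in> {0<..<T}"
  shows "(X has_vector_derivative - residual t) (at t)"
proof -
  have "(X has_vector_derivative - residual t) (at t within {0<..<T})"
    using assms by (intro has_vector_derivative_within_subset[OF X_has_derivative_residual]) auto
  moreover have "at t within {0<..<T} = at t" using assms by (intro at_within_open) auto
  ultimately show ?thesis by simp
qed

lemma X_increment_bound:
  assumes "0 \<le> s" "s \<le> s'" "s' < T"
  shows "norm (X s' - X s) \<le> decay_rate * (T - s) * (s' - s)"
proof (cases "s = s'")
  case False
  with assms have "s < s'" by simp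
  have "norm (X s' - X s) \<le> decay_rate * (T - s) * s' - decay_rate * (T - s) * s"
  proof (rule differentiable_bound_general[OF \<open>s < s'\<close>, where f' = "\<lambda>x. - residual x"])
    show "continuous_on {s..s'} X" using assms by (intro continuous_on_subset[OF continuous_on_X]) auto
    fix x assume x: "s < x" "x < s'"
    then show "(X has_vector_derivative - residual x) (at x)"
      using assms by (intro X_has_derivative_at) auto
    show "((\<lambda>x. decay_rate * (T - s) * x) has_vector_derivative decay_rate * (T - s)) (at x)"
      by (auto intro!: derivative_eq_intros simp: has_real_derivative_iff_has_vector_derivative[symmetric])
    have "norm (residual x) \<le> decay_rate * (T - x)" using x assms by (intro residual_bound) auto
    also have "\<dots> \<le> decay_rate * (T - s)" using x decay_rate_nonneg by (intro mult_left_mono) auto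
    finally show "norm (- residual x) \<le> decay_rate * (T - s)" by simp
  qed (intro continuous_intros)
  then show ?thesis by (simp add: algebra_simps)
qed simp

lemma lipschitz_on_X: "(decay_rate * T)-lipschitz_on {0..<T} X"
proof -
  have increment: "dist (X y) (X x) \<le> decay_rate * T * dist y x" if "0 \<le> x" "x \<le> y" "y < T" for x y
  proof -
    have "norm (X y - X x) \<le> decay_rate * (T - x) * (y - x)" using that by (rule X_increment_bound)
    also have "\<dots> \<le> decay_rate * T * (y - x)"
      using that decay_rate_nonneg by (intro mult_right_mono mult_left_mono) auto
    finally show ?thesis using that by (simp add: dist_norm)
  qed
  show ?thesis
  proof (rule lipschitz_onI)
    fix x y assume "x \<in> {0..<T}" "y \<in> {0..<T}"
    then show "dist (X x) (X y) \<le> decay_rate * T * dist x y"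
      using increment[of x y] increment[of y x] by (cases "x \<le> y") (auto simp: dist_commute)
  qed (use decay_rate_nonneg T_pos in simp)
qed

lemma X_converges: obtains l where "(X \<longlongrightarrow> l) (at_left T)"
  using uniformly_continuous_on_extension_at_closure[OF lipschitz_on_uniformly_continuous[OF lipschitz_on_X], of T]
    T_pos at_within_Ico_at_left[OF T_pos]
  by auto

lemma X_dist_limit:
  assumes l: "(X \<longlongrightarrow> l) (at_left T)" and s: "s \<in> {0..<T}"
  shows "norm (X s - l) \<le> decay_rate * (T - s)\<^sup>2"
proof -
  have bound: "eventually (\<lambda>r. norm (X r - X s) \<le> decay_rate * (T - s)\<^sup>2) (at_left T)"
    unfolding eventually_at_left_field
  proof (intro exI[of _ s] conjI allI impI)
    fix r assume r: "s < r" "r < T"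
    with s have "norm (X r - X s) \<le> decay_rate * (T - s) * (r - s)" by (intro X_increment_bound) auto
    also have "\<dots> \<le> decay_rate * (T - s) * (T - s)"
      using r s decay_rate_nonneg by (intro mult_left_mono) auto
    finally show "norm (X r - X s) \<le> decay_rate * (T - s)\<^sup>2" by (simp add: power2_eq_square)
  qed (use s in auto)
  have "((\<lambda>r. norm (X r - X s)) \<longlongrightarrow> norm (l - X s)) (at_left T)"
    by (intro tendsto_intros l)
  from tendsto_upperbound[OF this bound] show ?thesis by (simp add: norm_minus_commute)
qed

lemma linear_decay_tendsto_0: "((\<lambda>t. decay_rate * (T - t)) \<longlongrightarrow> 0) (at_left T)"
proof -
  have "((\<lambda>t. decay_rate * (T - t)) \<longlongrightarrow> decay_rate * (T - T)) (at_left T)"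
    by (intro tendsto_intros)
  then show ?thesis by simp
qed

lemma eventually_at_left_in_interval: "eventually (\<lambda>t. t \<in> {0<..<T}) (at_left T)"
  unfolding eventually_at_left_field using T_pos by (intro exI[of _ 0]) auto

lemma vector_derivative_X_tendsto_0: "((\<lambda>t. vector_derivative X (at t)) \<longlongrightarrow> 0) (at_left T)"
proof (rule Lim_null_comparison[OF _ linear_decay_tendsto_0])
  show "eventually (\<lambda>t. norm (vector_derivative X (at t)) \<le> decay_rate * (T - t)) (at_left T)"
    using eventually_at_left_in_interval
  proof eventually_elim
    case (elim t)
    then have "vector_derivative X (at t) = - residual t"
      by (intro vector_derivative_at X_has_derivative_at)
    with elim show ?case using residual_bound[of t] by simp
  qed
qed

lemma X_quotient_tendsto_0:
  assumes l: "(X \<longlongrightarrow> l) (at_left T)"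
  shows "((\<lambda>t. (1 / (t - T)) *\<^sub>R (X t - l)) \<longlongrightarrow> 0) (at_left T)"
proof (rule Lim_null_comparison[OF _ linear_decay_tendsto_0])
  show "eventually (\<lambda>t. norm ((1 / (t - T)) *\<^sub>R (X t - l)) \<le> decay_rate * (T - t)) (at_left T)"
    using eventually_at_left_in_interval
  proof eventually_elim
    case (elim t)
    then have "norm ((1 / (t - T)) *\<^sub>R (X t - l)) = norm (X t - l) / (T - t)"
      by (simp add: abs_if minus_divide_right)
    also have "\<dots> \<le> decay_rate * (T - t)\<^sup>2 / (T - t)"
      using X_dist_limit[OF l, of t] elim by (intro divide_right_mono) auto
    also have "\<dots> = decay_rate * (T - t)" using elim by (simp add: power2_eq_square)
    finally show ?case .
  qed
qed

end

theorem corollaryH4: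
  fixes A :: "real ^ 'd \<Rightarrow> real ^ 'd"
    and X Z :: "real \<Rightarrow> real ^ 'd"
    and T :: real and X0 :: "real ^ 'd"
  assumes lip: "\<exists>L. lipschitz_on L UNIV A"
    and mono: "monotone_op A"
    and T_pos: "T > 0"
    and X_ode: "\<And>t. t \<in> {0..<T} \<Longrightarrow>
        (X has_vector_derivative (- Z t - A (X t))) (at t within {0..<T})"
    and Z_ode: "\<And>t. t \<in> {0..<T} \<Longrightarrow>
        (Z has_vector_derivative (- (1 / (T - t)) *\<^sub>R Z t - (1 / (T - t)) *\<^sub>R A (X t)))
          (at t within {0..<T})"
    and X_init: "X 0 = X0"
    and Z_init: "Z 0 = 0"
  shows "\<exists>XT. (X \<longlongrightarrow> XT) (at_left T)
           \<and> ((\<lambda>t. vector_derivative X (at t)) \<longlongrightarrow> 0) (at_left T)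
           \<and> ((\<lambda>t. (1 / (t - T)) *\<^sub>R (X t - XT)) \<longlongrightarrow> 0) (at_left T)"
proof -
  obtain L where "L-lipschitz_on UNIV A" using lip by blast
  then interpret anchored_monotone_ode A X Z T L
    using mono T_pos X_ode Z_ode by unfold_locales
  obtain XT where "(X \<longlongrightarrow> XT) (at_left T)" by (rule X_converges)
  then show ?thesis using vector_derivative_X_tendsto_0 X_quotient_tendsto_0 by blast
qed

end
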